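(* Let $k\in\mathbb{Z}$, and let $\chi_i$ be a Dirichlet character modulo $q_i$ ($i=1,2$) induced by the primitive character $\chi_i^*$ of modulus $q_i^*\mid q_i$, with $\chi_1(-1)\chi_2(-1)=(-1)^k$. Then for $z\in\mathbb{H}$ and $\mathrm{Re}(s)>1$, \[ E_{\chi_1,\chi_2}(z,s)=\frac{L(2s,\chi_1^*\chi_2^* )}{L(2s,\chi_1\chi_2)}\sum_{a\mid q_1}\sum_{b\mid q_2}\frac{\mu(a)\chi_1^*(a)\mu(b)\chi_2^*(b)}{(ab)^s}\,E_{\chi_1^*,\chi_2^*}\Big(\frac{aq_2}{bq_2^*}z,s\Big). \]
   Context: For Dirichlet characters $\eta_1,\eta_2$ modulo $r_1,r_2$ with $\eta_1(-1)\eta_2(-1)=(-1)^k$, $z=x+iy\in\mathbb{H}$, $\mathrm{Re}(s)>1$, \[ E_{\eta_1,\eta_2}(z,s)=\frac12\sum_{\substack{c,d\in\mathbb{Z}\\ (c,d)=1}}\frac{(r_2y)^s\eta_1(c)\eta_2(d)}{|cr_2z+d|^{2s}}\Big(\frac{|cr_2z+d|}{cr_2z+d}\Big)^k. \] $\mu$ is the Möbius function and $L(s,\chi)$ the Dirichlet $L$-function (of the possibly imprimitive character $\chi_1\chi_2$). *)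

theory Defs
  imports "HOL-Analysis.Analysis" "HOL-Computational_Algebra.Squarefree"
begin

definition dirichlet_char :: "nat \<Rightarrow> (int \<Rightarrow> complex) \<Rightarrow> bool" where
  "dirichlet_char q chi \<longleftrightarrow> q > 0 \<and>
     (\<forall>n. chi (n + int q) = chi n) \<and>
     (\<forall>m n. chi (m * n) = chi m * chi n) \<and>
     (\<forall>n. chi n \<noteq> 0 \<longleftrightarrow> coprime n (int q))"

definition induced_char :: "nat \<Rightarrow> (int \<Rightarrow> complex) \<Rightarrow> nat \<Rightarrow> (int \<Rightarrow> complex) \<Rightarrow> bool" where
  "induced_char q chi q' chi' \<longleftrightarrow> dirichlet_char q chi \<and> dirichlet_char q' chi' \<and> q' dvd q \<and>
     (\<forall>n. chi n = (if coprime n (int q) then chi' n else 0))"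

definition primitive_char :: "nat \<Rightarrow> (int \<Rightarrow> complex) \<Rightarrow> bool" where
  "primitive_char q chi \<longleftrightarrow> dirichlet_char q chi \<and>
     (\<forall>d \<psi>. d < q \<longrightarrow> \<not> induced_char q chi d \<psi>)"

definition moebius_mu :: "nat \<Rightarrow> int" where
  "moebius_mu n = (if n = 0 \<or> \<not> squarefree n then 0 else (-1) ^ card (prime_factors n))"

definition dirichlet_L :: "(int \<Rightarrow> complex) \<Rightarrow> complex \<Rightarrow> complex" where
  "dirichlet_L chi s = (\<Sum>n. chi (int (Suc n)) / (of_nat (Suc n) powr s))"

text \<open>Eisenstein series E_{eta1,eta2}(z,s) of weight k with parameter r2 (modulus of eta2).\<close>
definition eisenstein :: "int \<Rightarrow> nat \<Rightarrow> (int \<Rightarrow> complex) \<Rightarrow> (int \<Rightarrow> complex) \<Rightarrow> complex \<Rightarrow> complex \<Rightarrow> complex" where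
  "eisenstein k r2 \<eta>1 \<eta>2 z s =
     (1/2) * infsum (\<lambda>(c :: int, d :: int).
        (let w = of_int c * of_nat r2 * z + of_int d in
          complex_of_real (real r2 * Im z) powr s * \<eta>1 c * \<eta>2 d
            / (complex_of_real (cmod w) powr (2 * s))
            * (complex_of_real (cmod w) / w) powi k))
       {(c, d). coprime c d}"

end

theory Submission
  imports Defs
begin

text \<open>
  Moebius inversion writes an imprimitive character through the primitive one inducing it:
  \<open>\<chi>(n)\<close> is the sum of \<open>\<mu>(a) \<chi>\<^sup>*(a) \<chi>\<^sup>*(n/a)\<close> over the common divisors \<open>a\<close> of \<open>n\<close> and \<open>q\<close>.
  Substituting this for \<open>\<chi>\<^sub>1(c)\<close> and \<open>\<chi>\<^sub>2(d)\<close> splits the Eisenstein sum over all nonzero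
  \<open>(c, d)\<close> into finitely many sums over the sublattices \<open>a\<int> \<times> b\<int>\<close>; writing \<open>(c, d) = (a c', b d')\<close>
  and \<open>a c' w + b d' = b (c' (a w / b) + d')\<close>, each of them is the sum for the primitive characters
  at the point \<open>a w / b\<close>. Sums over all nonzero pairs and over coprime pairs differ by the factor
  \<open>L(2s, \<chi>\<^sub>1\<chi>\<^sub>2)\<close> contributed by the common divisor, which is nonzero for \<open>Re s > 1\<close>; this
  produces the quotient of \<open>L\<close>-values. All series converge absolutely because \<open>|c z + d|\<^sup>2\<close>
  dominates a multiple of \<open>(|c| + 1)(|d| + 1)\<close>.
\<close>

lemma prime_factors_prod_primes:
  fixes S :: "nat set"
  assumes "finite S" "\<And>p. p \<in> S \<Longrightarrow> prime p"
  shows "prime_factors (\<Prod>S) = S"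
proof -
  have "0 \<notin> S" using assms(2) not_prime_0 by blast
  then show ?thesis using assms by (subst prime_factors_prod) (auto simp: prime_factorization_prime)
qed

lemma bij_betw_prod_prime_factors_squarefree_divisors:
  fixes m :: nat
  assumes "m > 0"
  shows "bij_betw Prod (Pow (prime_factors m)) {a. a dvd m \<and> squarefree a}"
proof (rule bij_betw_byWitness[where f' = prime_factors])
  show "\<forall>S\<in>Pow (prime_factors m). prime_factors (\<Prod>S) = S"
  proof
    fix S assume "S \<in> Pow (prime_factors m)"
    then show "prime_factors (\<Prod>S) = S"
      by (intro prime_factors_prod_primes) (auto intro: finite_subset)
  qed
  show "\<forall>a\<in>{a. a dvd m \<and> squarefree a}. \<Prod>(prime_factors a) = a"
  proof
    fix a assume a: "a \<in> {a. a dvd m \<and> squarefree a}"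
    then have "a \<noteq> 0" using assms by auto
    then have "a = (\<Prod>p\<in>prime_factors a. p ^ multiplicity p a)" by (intro prime_factorization_nat) simp
    also have "\<dots> = (\<Prod>p\<in>prime_factors a. p)"
      using a \<open>a \<noteq> 0\<close> by (intro prod.cong refl) (auto simp: squarefree_factorial_semiring')
    finally show "\<Prod>(prime_factors a) = a" by simp
  qed
  have "\<Prod>(prime_factors m) dvd m"
  proof -
    have "\<Prod>(prime_factors m) = (\<Prod>p\<in>prime_factors m. p ^ 1)" by simp
    also have "\<dots> dvd (\<Prod>p\<in>prime_factors m. p ^ multiplicity p m)"
      by (intro prod_dvd_prod le_imp_power_dvd) (auto simp: prime_factors_multiplicity)
    also have "\<dots> = m" using assms by (rule prime_factorization_nat[symmetric])
    finally show ?thesis .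
  qed
  have "\<Prod>S \<in> {a. a dvd m \<and> squarefree a}" if S: "S \<subseteq> prime_factors m" for S
  proof -
    have "\<Prod>S dvd \<Prod>(prime_factors m)" using S by (intro prod_dvd_prod_subset) auto
    then have "\<Prod>S dvd m" using \<open>\<Prod>(prime_factors m) dvd m\<close> by (rule dvd_trans)
    moreover have "squarefree (\<Prod>S)"
      using S by (intro squarefree_prod_coprime) (auto intro: primes_coprime squarefree_prime)
    ultimately show ?thesis by simp
  qed
  then show "Prod ` Pow (prime_factors m) \<subseteq> {a. a dvd m \<and> squarefree a}" by auto
  show "prime_factors ` {a. a dvd m \<and> squarefree a} \<subseteq> Pow (prime_factors m)"
    using assms by (auto intro: dvd_prime_factors[THEN subsetD])
qed

lemma moebius_mu_divisor_sum:
  assumes "m > 0"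
  shows "(\<Sum>a | a dvd m. moebius_mu a) = (if m = 1 then 1 else 0)"
proof -
  have "(\<Sum>a | a dvd m. moebius_mu a) = (\<Sum>a | a dvd m \<and> squarefree a. (-1) ^ card (prime_factors a))"
    using assms by (intro sum.mono_neutral_cong_right)
      (auto simp: moebius_mu_def finite_divisors_nat intro!: Nat.gr0I)
  also have "\<dots> = (\<Sum>S\<in>Pow (prime_factors m). (-1) ^ card (prime_factors (\<Prod>S)))"
    by (rule sum.reindex_bij_betw[symmetric, OF bij_betw_prod_prime_factors_squarefree_divisors[OF assms]])
  also have "\<dots> = (\<Sum>S\<in>Pow (prime_factors m). (-1) ^ card S * (\<Prod>p\<in>S. 1) * (\<Prod>p\<in>prime_factors m - S. 1))"
  proof (intro sum.cong refl)
    fix S assume "S \<in> Pow (prime_factors m)"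
    then have "prime_factors (\<Prod>S) = S"
      by (intro prime_factors_prod_primes) (auto intro: finite_subset)
    then show "(-1) ^ card (prime_factors (\<Prod>S)) = (-1) ^ card S * (\<Prod>p\<in>S. 1) * (\<Prod>p\<in>prime_factors m - S. 1 :: int)"
      by simp
  qed
  also have "\<dots> = (\<Prod>p\<in>prime_factors m. 1 - 1)"
    by (rule prod_diff_conv_sum[symmetric]) simp
  also have "\<dots> = (if m = 1 then 1 else 0)"
    using assms by (simp add: prime_factorization_empty_iff card_gt_0_iff)
  finally show ?thesis .
qed

lemma dirichlet_char_one:
  assumes "dirichlet_char q chi"
  shows "chi 1 = 1"
proof -
  have "chi 1 * chi 1 = chi 1 * 1" and "chi 1 \<noteq> 0"
    using assms unfolding dirichlet_char_def by (metis mult_1 mult.right_neutral, simp)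
  then show ?thesis by (metis mult_left_cancel)
qed

lemma dirichlet_char_mult:
  assumes "dirichlet_char q chi"
  shows "chi (m * n) = chi m * chi n"
  using assms unfolding dirichlet_char_def by blast

lemma dirichlet_char_power:
  assumes "dirichlet_char q chi"
  shows "chi (n ^ j) = chi n ^ j"
  by (induction j) (simp_all add: dirichlet_char_one[OF assms] dirichlet_char_mult[OF assms])

lemma dirichlet_char_mod:
  assumes "dirichlet_char q chi"
  shows "chi (n mod int q) = chi n"
proof -
  have shift: "chi (x + int j * int q) = chi x" for x j
  proof (induction j)
    case (Suc j)
    have "chi (x + int (Suc j) * int q) = chi ((x + int j * int q) + int q)"
      by (simp add: algebra_simps)
    also have "\<dots> = chi x" using assms Suc by (simp add: dirichlet_char_def)
    finally show ?case .
  qed simp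
  show ?thesis
  proof (cases "n div int q \<ge> 0")
    case True
    then show ?thesis
      using shift[of "n mod int q" "nat (n div int q)"] by (simp add: mult.commute)
  next
    case False
    then show ?thesis
      using shift[of n "nat (- (n div int q))"] by (simp add: minus_mult_div_eq_mod algebra_simps)
  qed
qed

lemma dirichlet_char_norm_le_1:
  assumes "dirichlet_char q chi"
  shows "norm (chi n) \<le> 1"
proof (rule ccontr)
  assume "\<not> norm (chi n) \<le> 1"
  then have gt: "norm (chi n) > 1" by simp
  have "q > 0" using assms unfolding dirichlet_char_def by simp
  define M where "M = Max ((\<lambda>x. norm (chi x)) ` {0..<int q})"
  have bounded: "norm (chi x) \<le> M" for x
    unfolding M_def dirichlet_char_mod[OF assms, of x, symmetric]
    using \<open>q > 0\<close> by (intro Max_ge) auto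
  obtain j where "M < norm (chi n) ^ j" using real_arch_pow[OF gt] by blast
  also have "\<dots> = norm (chi (n ^ j))" by (simp add: dirichlet_char_power[OF assms] norm_power)
  finally show False using bounded[of "n ^ j"] by simp
qed

lemma induced_char_moebius_expansion:
  assumes "induced_char q chi q' chi'"
  shows "chi n = (\<Sum>a | a dvd q. if int a dvd n then of_int (moebius_mu a) * chi' (int a) * chi' (n div int a) else 0)"
proof -
  have "dirichlet_char q' chi'" and "q > 0" and chi: "chi n = (if coprime n (int q) then chi' n else 0)"
    using assms unfolding induced_char_def dirichlet_char_def by auto
  define g where "g = gcd (nat \<bar>n\<bar>) q"
  have "g > 0" using \<open>q > 0\<close> unfolding g_def by simp
  have divisors: "{a. a dvd q \<and> int a dvd n} = {a. a dvd g}"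
    unfolding g_def gcd_greatest_iff by (auto simp: dvd_nat_abs_iff)
  have "(\<Sum>a | a dvd q. if int a dvd n then of_int (moebius_mu a) * chi' (int a) * chi' (n div int a) else 0)
      = (\<Sum>a | a dvd q. if int a dvd n then of_int (moebius_mu a) * chi' n else 0)"
  proof (intro sum.cong refl)
    fix a
    show "(if int a dvd n then of_int (moebius_mu a) * chi' (int a) * chi' (n div int a) else 0)
        = (if int a dvd n then of_int (moebius_mu a) * chi' n else 0)"
      using dirichlet_char_mult[OF \<open>dirichlet_char q' chi'\<close>, of "int a" "n div int a"] by auto
  qed
  also have "\<dots> = (\<Sum>a\<in>{a. a dvd q \<and> int a dvd n}. of_int (moebius_mu a) * chi' n)"
    using \<open>q > 0\<close> by (intro sum.mono_neutral_cong_right) (auto simp: finite_divisors_nat)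
  also have "\<dots> = of_int (\<Sum>a | a dvd g. moebius_mu a) * chi' n"
    unfolding divisors by (simp add: sum_distrib_right)
  also have "\<dots> = (if g = 1 then chi' n else 0)"
    using moebius_mu_divisor_sum[OF \<open>g > 0\<close>] by simp
  also have "g = 1 \<longleftrightarrow> coprime n (int q)" unfolding g_def
    by (metis coprime_iff_gcd_eq_1 coprime_nat_abs_left_iff coprime_int_iff)
  finally show ?thesis using chi by simp
qed

definition eisenstein_kernel :: "int \<Rightarrow> complex \<Rightarrow> complex \<Rightarrow> complex" where
  "eisenstein_kernel k s w =
     1 / complex_of_real (cmod w) powr (2 * s) * (complex_of_real (cmod w) / w) powi k"

lemma eisenstein_kernel_scale:
  assumes "t > 0"
  shows "eisenstein_kernel k s (complex_of_real t * w) = eisenstein_kernel k s w / complex_of_real t powr (2 * s)"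
proof -
  have "complex_of_real (t * cmod w) powr (2 * s) = complex_of_real t powr (2 * s) * complex_of_real (cmod w) powr (2 * s)"
    using assms by (simp add: powr_times_real_left)
  moreover have "complex_of_real (t * cmod w) / (complex_of_real t * w) = complex_of_real (cmod w) / w"
    using assms by simp
  ultimately show ?thesis using assms by (simp add: eisenstein_kernel_def norm_mult)
qed

lemma norm_eisenstein_kernel: "norm (eisenstein_kernel k s w) = cmod w powr (- 2 * Re s)"
proof (cases "w = 0")
  case False
  have "norm (complex_of_real (cmod w) powr (2 * s)) = cmod w powr (2 * Re s)"
    by (subst norm_powr_real_powr) auto
  moreover have "norm ((complex_of_real (cmod w) / w) powi k) = 1"
    using False by (simp add: norm_power_int norm_divide)
  ultimately show ?thesis
    by (simp add: eisenstein_kernel_def norm_mult norm_divide norm_inverse powr_minus divide_inverse)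
qed (simp add: eisenstein_kernel_def)

lemma quadratic_form_lower_bound:
  fixes c d x y :: real
  assumes "y > 0"
  shows "y\<^sup>2 / (2 * (1 + x\<^sup>2 + y\<^sup>2)) * (c\<^sup>2 + d\<^sup>2) \<le> (c * x + d)\<^sup>2 + (c * y)\<^sup>2"
proof -
  define D u where "D = 1 + x\<^sup>2 + y\<^sup>2" and "u = c * x + d"
  have "D > 0" unfolding D_def by (simp add: add_pos_nonneg)
  have "d\<^sup>2 \<le> 2 * u\<^sup>2 + 2 * (c\<^sup>2 * x\<^sup>2)"
    using zero_le_power2[of "u + c * x"] unfolding u_def by (simp add: power2_eq_square algebra_simps)
  then have "y\<^sup>2 * d\<^sup>2 \<le> y\<^sup>2 * (2 * u\<^sup>2 + 2 * (c\<^sup>2 * x\<^sup>2))"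
    by (rule mult_left_mono) simp
  then have "y\<^sup>2 * (c\<^sup>2 + d\<^sup>2) \<le> 2 * y\<^sup>2 * u\<^sup>2 + (1 + 2 * x\<^sup>2) * (c\<^sup>2 * y\<^sup>2)"
    by (simp add: algebra_simps)
  also have "\<dots> \<le> 2 * D * u\<^sup>2 + 2 * D * (c\<^sup>2 * y\<^sup>2)"
    unfolding D_def by (intro add_mono mult_right_mono) auto
  finally have "y\<^sup>2 * (c\<^sup>2 + d\<^sup>2) / (2 * D) \<le> u\<^sup>2 + (c * y)\<^sup>2"
    using \<open>D > 0\<close> by (simp add: pos_divide_le_eq algebra_simps power_mult_distrib)
  then show ?thesis unfolding u_def D_def by (simp add: mult.commute)
qed

lemma abs_plus_one_mult_le_sum_squares:
  fixes a b :: int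
  assumes "(a, b) \<noteq> (0, 0)"
  shows "(\<bar>a\<bar> + 1) * (\<bar>b\<bar> + 1) \<le> 3 * (a\<^sup>2 + b\<^sup>2)"
proof -
  have abs_le_square: "\<bar>t\<bar> \<le> t\<^sup>2" for t :: int
  proof (cases "t = 0")
    case False
    then have "\<bar>t\<bar> * 1 \<le> \<bar>t\<bar> * \<bar>t\<bar>" by (intro mult_left_mono) auto
    then show ?thesis by (simp add: power2_eq_square abs_mult_self)
  qed simp
  have "2 * (\<bar>a\<bar> * \<bar>b\<bar>) \<le> a\<^sup>2 + b\<^sup>2"
    using zero_le_power2[of "\<bar>a\<bar> - \<bar>b\<bar>"] by (simp add: power2_eq_square algebra_simps abs_mult_self)
  moreover have "1 \<le> a\<^sup>2 + b\<^sup>2"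
    using assms by (metis add.commute add_0 add_increasing2 int_one_le_iff_zero_less zero_le_power2
        zero_less_power2 prod.inject)
  moreover have "(\<bar>a\<bar> + 1) * (\<bar>b\<bar> + 1) = \<bar>a\<bar> * \<bar>b\<bar> + \<bar>a\<bar> + \<bar>b\<bar> + 1"
    by (simp add: algebra_simps)
  ultimately show ?thesis using abs_le_square[of a] abs_le_square[of b] by (smt (verit))
qed

lemma lattice_point_norm_lower_bound:
  assumes "Im z > 0"
  obtains e :: real where "e > 0"
    "\<And>c d :: int. (c, d) \<noteq> (0, 0) \<Longrightarrow>
       e * ((\<bar>real_of_int c\<bar> + 1) * (\<bar>real_of_int d\<bar> + 1)) \<le> (cmod (of_int c * z + of_int d))\<^sup>2"
proof
  define e where "e = (Im z)\<^sup>2 / (2 * (1 + (Re z)\<^sup>2 + (Im z)\<^sup>2))"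
  have "e > 0" unfolding e_def using assms by (intro divide_pos_pos) (auto simp: add_pos_nonneg)
  then show "e / 3 > 0" by simp
  fix c d :: int assume "(c, d) \<noteq> (0, 0)"
  then have "real_of_int ((\<bar>c\<bar> + 1) * (\<bar>d\<bar> + 1)) \<le> real_of_int (3 * (c\<^sup>2 + d\<^sup>2))"
    by (subst of_int_le_iff) (rule abs_plus_one_mult_le_sum_squares)
  then have "(\<bar>real_of_int c\<bar> + 1) * (\<bar>real_of_int d\<bar> + 1) \<le> 3 * ((real_of_int c)\<^sup>2 + (real_of_int d)\<^sup>2)"
    by simp
  then have "e / 3 * ((\<bar>real_of_int c\<bar> + 1) * (\<bar>real_of_int d\<bar> + 1)) \<le> e * ((real_of_int c)\<^sup>2 + (real_of_int d)\<^sup>2)"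
    using \<open>e > 0\<close> by simp
  also have "\<dots> \<le> (real_of_int c * Re z + real_of_int d)\<^sup>2 + (real_of_int c * Im z)\<^sup>2"
    unfolding e_def using quadratic_form_lower_bound assms by blast
  also have "\<dots> = (cmod (of_int c * z + of_int d))\<^sup>2" by (simp add: cmod_power2)
  finally show "e / 3 * ((\<bar>real_of_int c\<bar> + 1) * (\<bar>real_of_int d\<bar> + 1)) \<le> (cmod (of_int c * z + of_int d))\<^sup>2" .
qed

lemma summable_on_abs_plus_one_powr:
  assumes "\<sigma> > 1"
  shows "(\<lambda>c::int. (\<bar>real_of_int c\<bar> + 1) powr (- \<sigma>)) summable_on UNIV"
proof -
  define g where "g = (\<lambda>c::int. (\<bar>real_of_int c\<bar> + 1) powr (- \<sigma>))"
  have "summable (\<lambda>n. real (Suc n) powr (- \<sigma>))"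
    using assms by (subst summable_Suc_iff) (simp add: summable_real_powr_iff)
  then have "(\<lambda>n. real (Suc n) powr (- \<sigma>)) summable_on UNIV"
    by (subst summable_on_UNIV_nonneg_real_iff) auto
  moreover have "g \<circ> int = (\<lambda>n. real (Suc n) powr (- \<sigma>))"
    and "g \<circ> (\<lambda>n. - int n) = (\<lambda>n. real (Suc n) powr (- \<sigma>))"
    unfolding g_def by (auto simp: add.commute)
  ultimately have "g summable_on range int" and "g summable_on range (\<lambda>n. - int n)"
    by (simp_all add: summable_on_reindex inj_on_def)
  moreover have "UNIV = range int \<union> range (\<lambda>n. - int n)"
  proof (intro set_eqI iffI)
    fix c :: int
    show "c \<in> range int \<union> range (\<lambda>n. - int n)"
      by (cases "c \<ge> 0") (auto intro: range_eqI[of _ _ "nat c"] range_eqI[of _ _ "nat (- c)"])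
  qed auto
  ultimately show ?thesis unfolding g_def by (metis summable_on_union)
qed

lemma summable_on_lattice_norm_powr:
  assumes "Im z > 0" "\<sigma> > 1"
  shows "(\<lambda>(c::int, d::int). cmod (of_int c * z + of_int d) powr (- 2 * \<sigma>)) summable_on - {(0, 0)}"
proof -
  obtain e where "e > 0" and e:
    "\<And>c d :: int. (c, d) \<noteq> (0, 0) \<Longrightarrow>
       e * ((\<bar>real_of_int c\<bar> + 1) * (\<bar>real_of_int d\<bar> + 1)) \<le> (cmod (of_int c * z + of_int d))\<^sup>2"
    using lattice_point_norm_lower_bound[OF assms(1)] by blast
  define g where "g = (\<lambda>c::int. (\<bar>real_of_int c\<bar> + 1) powr (- \<sigma>))"
  have "g summable_on UNIV" unfolding g_def by (rule summable_on_abs_plus_one_powr[OF assms(2)])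
  then have "(\<lambda>(c, d). g c * g d) summable_on UNIV \<times> UNIV"
    by (intro summable_on_SigmaI[where g = "\<lambda>c. g c * infsum g UNIV"])
       (auto intro: has_sum_cmult_right summable_on_cmult_left simp: g_def)
  then have "(\<lambda>p. e powr (- \<sigma>) * (case p of (c, d) \<Rightarrow> g c * g d)) summable_on UNIV"
    by (intro summable_on_cmult_right) simp
  then have "(\<lambda>(c, d). e powr (- \<sigma>) * (g c * g d)) summable_on - {(0, 0)}"
    by (rule summable_on_subset_banach[where A = UNIV, THEN summable_on_cong[THEN iffD1, rotated]])
       (auto simp: case_prod_unfold)
  then show ?thesis
  proof (rule summable_on_comparison_test)
    fix p :: "int \<times> int" assume "p \<in> - {(0, 0)}"
    then obtain c d where p: "p = (c, d)" "(c, d) \<noteq> (0, 0)" by (cases p) auto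
    define P where "P = (\<bar>real_of_int c\<bar> + 1) * (\<bar>real_of_int d\<bar> + 1)"
    have "e * P > 0" unfolding P_def using \<open>e > 0\<close> by (simp add: add_pos_nonneg)
    have "cmod (of_int c * z + of_int d) powr (- 2 * \<sigma>) = ((cmod (of_int c * z + of_int d))\<^sup>2) powr (- \<sigma>)"
      by (simp add: powr_powr flip: powr_numeral)
    also have "\<dots> \<le> (e * P) powr (- \<sigma>)"
      using assms(2) \<open>e * P > 0\<close> e[OF p(2)] unfolding P_def by (intro powr_mono2') auto
    also have "\<dots> = e powr (- \<sigma>) * (g c * g d)" unfolding g_def P_def by (simp add: powr_mult)
    finally show "(\<lambda>(c, d). cmod (of_int c * z + of_int d) powr (- 2 * \<sigma>)) p
        \<le> (\<lambda>(c, d). e powr (- \<sigma>) * (g c * g d)) p" using p by simp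
  qed (simp add: case_prod_unfold)
qed

definition lattice_term ::
    "int \<Rightarrow> complex \<Rightarrow> (int \<Rightarrow> complex) \<Rightarrow> (int \<Rightarrow> complex) \<Rightarrow> complex \<Rightarrow> int \<times> int \<Rightarrow> complex" where
  "lattice_term k s e1 e2 w = (\<lambda>(c, d). e1 c * e2 d * eisenstein_kernel k s (of_int c * w + of_int d))"

lemma lattice_term_summable_on:
  assumes "Im w > 0" "Re s > 1" "\<And>n. norm (e1 n) \<le> 1" "\<And>n. norm (e2 n) \<le> 1"
  shows "lattice_term k s e1 e2 w summable_on - {(0, 0)}"
proof -
  have "(\<lambda>p. norm (lattice_term k s e1 e2 w p)) summable_on - {(0, 0)}"
  proof (rule Infinite_Sum.abs_summable_on_comparison_test'[OF summable_on_lattice_norm_powr[OF assms(1,2)]])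
    fix p :: "int \<times> int"
    obtain c d where p: "p = (c, d)" by (cases p)
    have "norm (lattice_term k s e1 e2 w p)
        = norm (e1 c) * norm (e2 d) * cmod (of_int c * w + of_int d) powr (- 2 * Re s)"
      by (simp add: lattice_term_def p norm_mult norm_eisenstein_kernel)
    also have "\<dots> \<le> cmod (of_int c * w + of_int d) powr (- 2 * Re s)"
      using assms(3,4) mult_mono[of "norm (e1 c)" 1 "norm (e2 d)" 1]
      by (intro mult_left_le_one_le mult_nonneg_nonneg) auto
    finally show "norm (lattice_term k s e1 e2 w p)
        \<le> (\<lambda>(c, d). cmod (of_int c * w + of_int d) powr (- 2 * Re s)) p"
      using p by simp
  qed
  then show ?thesis by (simp add: summable_on_iff_abs_summable_on_complex)
qed

lemma lattice_term_homogeneous: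
  assumes "dirichlet_char q1 e1" "dirichlet_char q2 e2" "n > 0"
  shows "lattice_term k s e1 e2 w (int n * c, int n * d)
       = e1 (int n) * e2 (int n) / of_nat n powr (2 * s) * lattice_term k s e1 e2 w (c, d)"
proof -
  have "of_int (int n * c) * w + of_int (int n * d) = complex_of_real (real n) * (of_int c * w + of_int d)"
    by (simp add: algebra_simps)
  then have "eisenstein_kernel k s (of_int (int n * c) * w + of_int (int n * d))
      = eisenstein_kernel k s (of_int c * w + of_int d) / of_nat n powr (2 * s)"
    using eisenstein_kernel_scale[of "real n"] assms(3) by simp
  then show ?thesis
    by (simp add: lattice_term_def dirichlet_char_mult[OF assms(1)] dirichlet_char_mult[OF assms(2)])
qed

text \<open>Grouping the nonzero lattice points by \<open>n = gcd c d\<close>.\<close>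

lemma infsum_nonzero_lattice_eq_coprime:
  fixes f :: "int \<times> int \<Rightarrow> complex" and \<phi> :: "nat \<Rightarrow> complex"
  assumes "f summable_on - {(0, 0)}"
    and "\<And>n c d. n > 0 \<Longrightarrow> f (int n * c, int n * d) = \<phi> n * f (c, d)"
    and "summable (\<lambda>n. \<phi> (Suc n))"
  shows "infsum f (- {(0, 0)}) = (\<Sum>n. \<phi> (Suc n)) * infsum f {(c, d). coprime c d}"
proof -
  define Cop where "Cop = {(c :: int, d :: int). coprime c d}"
  define j where "j = (\<lambda>(n :: nat, (c :: int, d :: int)). (int (Suc n) * c, int (Suc n) * d))"
  define i where "i = (\<lambda>(c :: int, d :: int). (nat (gcd c d) - 1, (c div gcd c d, d div gcd c d)))"
  have "f summable_on Cop"
    using assms(1) by (rule summable_on_subset_banach) (auto simp: Cop_def)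
  have "((\<lambda>(n, p). \<phi> (Suc n) * f p) has_sum infsum f (- {(0, 0)})) (UNIV \<times> Cop)
      \<longleftrightarrow> (f has_sum infsum f (- {(0, 0)})) (- {(0, 0)})"
  proof (rule has_sum_reindex_bij_witness[where i = i and j = j])
    fix a :: "nat \<times> int \<times> int" assume "a \<in> UNIV \<times> Cop"
    then obtain n c d where a: "a = (n, (c, d))" "coprime c d" unfolding Cop_def by auto
    then have "gcd ((1 + int n) * c) ((1 + int n) * d) = 1 + int n"
      by (simp add: gcd_mult_distrib_int[symmetric])
    then show "i (j a) = a" unfolding a i_def j_def by simp
    show "j a \<in> - {(0, 0)}" using a by (auto simp: j_def)
    show "f (j a) = (\<lambda>(n, p). \<phi> (Suc n) * f p) a" unfolding a j_def using assms(2)[of "Suc n"] by simp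
  next
    fix b :: "int \<times> int" assume "b \<in> - {(0, 0)}"
    then obtain c d where b: "b = (c, d)" "c \<noteq> 0 \<or> d \<noteq> 0" by (cases b) auto
    then have "int (Suc (nat (gcd c d) - 1)) = gcd c d" by simp
    then show "j (i b) = b" unfolding b i_def j_def by simp
    show "i b \<in> UNIV \<times> Cop" unfolding b i_def Cop_def using div_gcd_coprime[OF b(2)] by simp
  qed simp
  then have "((\<lambda>(n, p). \<phi> (Suc n) * f p) has_sum infsum f (- {(0, 0)})) (UNIV \<times> Cop)"
    using assms(1) by simp
  then have "((\<lambda>n. \<phi> (Suc n) * infsum f Cop) has_sum infsum f (- {(0, 0)})) UNIV"
    by (rule has_sum_SigmaD) (auto intro: has_sum_cmult_right has_sum_infsum \<open>f summable_on Cop\<close>)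
  then have "(\<lambda>n. \<phi> (Suc n) * infsum f Cop) sums infsum f (- {(0, 0)})"
    by (rule has_sum_imp_sums)
  moreover have "(\<lambda>n. \<phi> (Suc n) * infsum f Cop) sums ((\<Sum>n. \<phi> (Suc n)) * infsum f Cop)"
    using assms(3) by (intro sums_mult2 summable_sums)
  ultimately show ?thesis unfolding Cop_def by (rule sums_unique2)
qed

lemma has_sum_dilated_lattice:
  fixes F :: "int \<times> int \<Rightarrow> 'b :: {comm_monoid_add, topological_space}"
  assumes "a > 0" "b > 0" "(F has_sum S) (- {(0, 0)})"
  shows "((\<lambda>(c, d). if int a dvd c \<and> int b dvd d then F (c div int a, d div int b) else 0)
           has_sum S) (- {(0, 0)})"
proof -
  define D where "D = {(c, d). (c, d) \<noteq> (0, 0) \<and> int a dvd c \<and> int b dvd d}"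
  have "((\<lambda>(c, d). F (c div int a, d div int b)) has_sum S) D"
    using assms(3)
    by (subst has_sum_reindex_bij_witness[where S = "- {(0, 0)}" and T = D
          and i = "\<lambda>(c, d). (c div int a, d div int b)" and j = "\<lambda>(c, d). (int a * c, int b * d)",
          symmetric])
       (use assms(1,2) in \<open>auto simp: D_def\<close>)
  then show ?thesis
    by (rule has_sum_cong_neutral[THEN iffD1, rotated -1]) (auto simp: D_def split: if_splits)
qed

lemma has_sum_sum:
  fixes f :: "'i \<Rightarrow> 'a \<Rightarrow> 'b :: topological_comm_monoid_add"
  assumes "finite I" "\<And>i. i \<in> I \<Longrightarrow> (f i has_sum S i) A"
  shows "((\<lambda>x. \<Sum>i\<in>I. f i x) has_sum (\<Sum>i\<in>I. S i)) A"
  using assms by (induction I rule: finite_induct) (auto intro: has_sum_add)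

lemma norm_dirichlet_L_term_le:
  assumes "norm (e (int n)) \<le> 1"
  shows "norm (e (int n) / of_nat n powr s) \<le> real n powr (- Re s)"
proof -
  have "norm (of_nat n powr s :: complex) = real n powr Re s"
    by (subst norm_powr_real_powr) auto
  then have "norm (e (int n) / of_nat n powr s) = norm (e (int n)) / real n powr Re s"
    by (simp add: norm_divide)
  also have "\<dots> \<le> 1 / real n powr Re s" using assms by (intro divide_right_mono) auto
  finally show ?thesis by (simp add: powr_minus divide_inverse)
qed

lemma summable_norm_dirichlet_L:
  assumes "\<And>n. norm (e n) \<le> 1" "Re s > 1"
  shows "summable (\<lambda>n. norm (e (int (Suc n)) / of_nat (Suc n) powr s))"
proof (rule summable_comparison_test')
  show "summable (\<lambda>n. real (Suc n) powr (- Re s))"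
    using assms(2) by (subst summable_Suc_iff) (simp add: summable_real_powr_iff)
  show "norm (norm (e (int (Suc n)) / of_nat (Suc n) powr s)) \<le> real (Suc n) powr (- Re s)" for n
    using norm_dirichlet_L_term_le[where e = e and n = "Suc n" and s = s] assms(1) by simp
qed

text \<open>For \<open>Re s \<ge> 2\<close> the terms with \<open>n \<ge> 2\<close> sum to less than \<open>\<zeta>(2) - 1 < 1\<close> in absolute value.\<close>

lemma dirichlet_L_nonzero:
  assumes "\<And>n. norm (e n) \<le> 1" "e 1 = 1" "Re s \<ge> 2"
  shows "dirichlet_L e s \<noteq> 0"
proof -
  define t where "t = (\<lambda>n. e (int (Suc n)) / of_nat (Suc n) powr s)"
  have "summable (\<lambda>n. norm (t n))"
    unfolding t_def using assms by (intro summable_norm_dirichlet_L) auto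
  then have summable_tail: "summable (\<lambda>n. norm (t (Suc n)))" by (subst summable_Suc_iff)
  have "(\<lambda>n. 1 / (real n + 1)\<^sup>2) sums (pi\<^sup>2 / 6)"
    using inverse_squares_sums by (simp add: add.commute)
  then have squares: "(\<lambda>n. 1 / (real (Suc n) + 1)\<^sup>2) sums (pi\<^sup>2 / 6 - 1)"
    by (subst sums_Suc_iff) simp
  have "norm (t (Suc n)) \<le> 1 / (real (Suc n) + 1)\<^sup>2" for n
  proof -
    have "norm (t (Suc n)) \<le> real (Suc (Suc n)) powr (- Re s)"
      unfolding t_def by (rule norm_dirichlet_L_term_le[where e = e, OF assms(1)])
    also have "\<dots> \<le> real (Suc (Suc n)) powr (- 2)" using assms(3) by (intro powr_mono) auto
    also have "\<dots> = 1 / (real (Suc n) + 1)\<^sup>2" by (simp add: powr_minus divide_inverse add.commute)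
    finally show ?thesis .
  qed
  then have "(\<Sum>n. norm (t (Suc n))) \<le> (\<Sum>n. 1 / (real (Suc n) + 1)\<^sup>2)"
    using summable_tail squares by (intro suminf_le) (auto simp: sums_iff)
  then have "norm (\<Sum>n. t (Suc n)) \<le> pi\<^sup>2 / 6 - 1"
    using summable_norm[OF summable_tail] squares by (simp add: sums_iff)
  also have "\<dots> < 1"
  proof -
    have "pi * pi \<le> 3.2 * 3.2" using pi_approx(2) pi_gt_zero by (intro mult_mono) auto
    then show ?thesis by (simp add: power2_eq_square)
  qed
  finally have "norm (\<Sum>n. t (Suc n)) < 1" .
  moreover have "dirichlet_L e s = 1 + (\<Sum>n. t (Suc n))"
    using suminf_split_head[OF summable_norm_cancel[OF \<open>summable (\<lambda>n. norm (t n))\<close>]] assms(2)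
    by (simp add: dirichlet_L_def t_def)
  ultimately show ?thesis by (auto simp: add_eq_0_iff)
qed

lemma norm_dirichlet_char_product_le_1:
  assumes "dirichlet_char q1 e1" "dirichlet_char q2 e2"
  shows "norm (e1 n * e2 n) \<le> 1"
  using dirichlet_char_norm_le_1[OF assms(1)] dirichlet_char_norm_le_1[OF assms(2)]
  by (simp add: norm_mult mult_le_one)

lemma infsum_lattice_term_eq_dirichlet_L_mult:
  assumes "dirichlet_char q1 e1" "dirichlet_char q2 e2" "Im w > 0" "Re s > 1"
  shows "infsum (lattice_term k s e1 e2 w) (- {(0, 0)})
       = dirichlet_L (\<lambda>n. e1 n * e2 n) (2 * s) * infsum (lattice_term k s e1 e2 w) {(c, d). coprime c d}"
proof -
  have "Re (2 * s) > 1" using assms(4) by simp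
  from summable_norm_dirichlet_L[of "\<lambda>n. e1 n * e2 n", OF norm_dirichlet_char_product_le_1[OF assms(1,2)] this]
  have summable: "summable (\<lambda>n. e1 (int (Suc n)) * e2 (int (Suc n)) / of_nat (Suc n) powr (2 * s))"
    by (rule summable_norm_cancel)
  show ?thesis
    unfolding dirichlet_L_def
  proof (rule infsum_nonzero_lattice_eq_coprime[where \<phi> = "\<lambda>n. e1 (int n) * e2 (int n) / of_nat n powr (2 * s)"])
    show "lattice_term k s e1 e2 w summable_on - {(0, 0)}"
      using dirichlet_char_norm_le_1[OF assms(1)] dirichlet_char_norm_le_1[OF assms(2)]
      by (intro lattice_term_summable_on assms(3,4))
  qed (use lattice_term_homogeneous[OF assms(1,2)] summable in simp_all)
qed

lemma dirichlet_L_char_product_nonzero: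
  assumes "dirichlet_char q1 e1" "dirichlet_char q2 e2" "Re s > 1"
  shows "dirichlet_L (\<lambda>n. e1 n * e2 n) (2 * s) \<noteq> 0"
proof (rule dirichlet_L_nonzero)
  show "norm (e1 n * e2 n) \<le> 1" for n by (rule norm_dirichlet_char_product_le_1[OF assms(1,2)])
  show "e1 1 * e2 1 = 1" by (simp add: dirichlet_char_one[OF assms(1)] dirichlet_char_one[OF assms(2)])
  show "Re (2 * s) \<ge> 2" using assms(3) by simp
qed

definition eisenstein_lattice_sum ::
    "int \<Rightarrow> complex \<Rightarrow> (int \<Rightarrow> complex) \<Rightarrow> (int \<Rightarrow> complex) \<Rightarrow> complex \<Rightarrow> complex" where
  "eisenstein_lattice_sum k s e1 e2 w =
     complex_of_real (Im w) powr s * infsum (lattice_term k s e1 e2 w) (- {(0, 0)})"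

lemma eisenstein_eq_lattice_sum:
  assumes "dirichlet_char q e1" "dirichlet_char r e2" "Im z > 0" "Re s > 1"
  shows "eisenstein k r e1 e2 z s
       = eisenstein_lattice_sum k s e1 e2 (of_nat r * z) / (2 * dirichlet_L (\<lambda>n. e1 n * e2 n) (2 * s))"
proof -
  define L where "L = dirichlet_L (\<lambda>n. e1 n * e2 n) (2 * s)"
  have "r > 0" using assms(2) by (simp add: dirichlet_char_def)
  then have "Im (of_nat r * z) > 0" using assms(3) by simp
  have "L \<noteq> 0" unfolding L_def by (rule dirichlet_L_char_product_nonzero[OF assms(1,2,4)])
  have "eisenstein k r e1 e2 z s
      = 1 / 2 * (complex_of_real (Im (of_nat r * z)) powr s
          * infsum (lattice_term k s e1 e2 (of_nat r * z)) {(c, d). coprime c d})"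
  proof -
    have "(\<lambda>(c, d). let w = of_int c * of_nat r * z + of_int d in
            complex_of_real (real r * Im z) powr s * e1 c * e2 d
              / complex_of_real (cmod w) powr (2 * s) * (complex_of_real (cmod w) / w) powi k)
        = (\<lambda>p. complex_of_real (Im (of_nat r * z)) powr s * lattice_term k s e1 e2 (of_nat r * z) p)"
      by (auto simp: lattice_term_def eisenstein_kernel_def Let_def fun_eq_iff mult.assoc)
    then show ?thesis unfolding eisenstein_def by (simp add: infsum_cmult_right' mult.assoc)
  qed
  also have "\<dots> = eisenstein_lattice_sum k s e1 e2 (of_nat r * z) / (2 * L)"
    using infsum_lattice_term_eq_dirichlet_L_mult[OF assms(1,2) \<open>Im (of_nat r * z) > 0\<close> assms(4)]
      \<open>L \<noteq> 0\<close>
    by (simp add: eisenstein_lattice_sum_def L_def)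
  finally show ?thesis unfolding L_def .
qed

lemma eisenstein_rescaled_eq_lattice_sum:
  assumes "dirichlet_char q e1" "dirichlet_char r e2" "Im z > 0" "Re s > 1" "a > 0" "b > 0" "n > 0"
  shows "eisenstein k r e1 e2 (complex_of_real (real (a * n) / real (b * r)) * z) s
       = eisenstein_lattice_sum k s e1 e2 (complex_of_real (real a / real b) * (of_nat n * z))
         / (2 * dirichlet_L (\<lambda>n. e1 n * e2 n) (2 * s))"
proof -
  have "r > 0" using assms(2) by (simp add: dirichlet_char_def)
  then have "Im (complex_of_real (real (a * n) / real (b * r)) * z) > 0"
    using assms(3,5-7) by simp
  moreover have "of_nat r * (complex_of_real (real (a * n) / real (b * r)) * z)
      = complex_of_real (real a / real b) * (of_nat n * z)"
    using \<open>r > 0\<close> by (simp add: field_simps)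
  ultimately show ?thesis using eisenstein_eq_lattice_sum[OF assms(1,2) _ assms(4)] by simp
qed

lemma eisenstein_kernel_sublattice:
  assumes "b > 0"
  shows "eisenstein_kernel k s (of_int (int a * c) * w + of_int (int b * d))
       = eisenstein_kernel k s (of_int c * (complex_of_real (real a / real b) * w) + of_int d)
         / of_nat b powr (2 * s)"
proof -
  have "of_int (int a * c) * w + of_int (int b * d)
      = complex_of_real (real b) * (of_int c * (complex_of_real (real a / real b) * w) + of_int d)"
    using assms by (simp add: field_simps)
  then show ?thesis using eisenstein_kernel_scale[of "real b"] assms by simp
qed

lemma lattice_term_induced_expansion:
  assumes "induced_char q1 chi1 q1s chi1s" "induced_char q2 chi2 q2s chi2s"
  shows "lattice_term k s chi1 chi2 w (c, d) =
    (\<Sum>a | a dvd q1. \<Sum>b | b dvd q2.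
       if int a dvd c \<and> int b dvd d then
         of_int (moebius_mu a) * chi1s (int a) * of_int (moebius_mu b) * chi2s (int b)
           / of_nat b powr (2 * s)
         * lattice_term k s chi1s chi2s (complex_of_real (real a / real b) * w) (c div int a, d div int b)
       else 0)"
proof -
  have "q1 > 0" "q2 > 0" using assms by (auto simp: induced_char_def dirichlet_char_def)
  define X where "X a = (if int a dvd c then of_int (moebius_mu a) * chi1s (int a) * chi1s (c div int a) else 0)"
    for a :: nat
  define Y where "Y b = (if int b dvd d then of_int (moebius_mu b) * chi2s (int b) * chi2s (d div int b) else 0)"
    for b :: nat
  define K where "K = eisenstein_kernel k s (of_int c * w + of_int d)"
  have "lattice_term k s chi1 chi2 w (c, d) = (\<Sum>a | a dvd q1. X a) * (\<Sum>b | b dvd q2. Y b) * K"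
    unfolding X_def Y_def K_def induced_char_moebius_expansion[OF assms(1), symmetric]
      induced_char_moebius_expansion[OF assms(2), symmetric]
    by (simp add: lattice_term_def)
  also have "\<dots> = (\<Sum>a | a dvd q1. \<Sum>b | b dvd q2. X a * Y b * K)"
    by (subst sum_product) (simp only: sum_distrib_right)
  also have "\<dots> = (\<Sum>a | a dvd q1. \<Sum>b | b dvd q2.
       if int a dvd c \<and> int b dvd d then
         of_int (moebius_mu a) * chi1s (int a) * of_int (moebius_mu b) * chi2s (int b)
           / of_nat b powr (2 * s)
         * lattice_term k s chi1s chi2s (complex_of_real (real a / real b) * w) (c div int a, d div int b)
       else 0)"
  proof (intro sum.cong refl)
    fix a b assume "a \<in> {a. a dvd q1}" "b \<in> {b. b dvd q2}"
    then have "a > 0" "b > 0" using \<open>q1 > 0\<close> \<open>q2 > 0\<close> by (auto intro: dvd_pos_nat)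
    show "X a * Y b * K = (if int a dvd c \<and> int b dvd d then
           of_int (moebius_mu a) * chi1s (int a) * of_int (moebius_mu b) * chi2s (int b)
             / of_nat b powr (2 * s)
           * lattice_term k s chi1s chi2s (complex_of_real (real a / real b) * w) (c div int a, d div int b)
         else 0)"
    proof (cases "int a dvd c \<and> int b dvd d")
      case True
      then obtain c' d' where "c = int a * c'" "d = int b * d'" by (auto elim!: dvdE)
      then show ?thesis
        using \<open>a > 0\<close> eisenstein_kernel_sublattice[OF \<open>b > 0\<close>, of k s a c' w d']
        by (simp add: X_def Y_def K_def lattice_term_def)
    qed (auto simp: X_def Y_def)
  qed
  finally show ?thesis .
qed

lemma powr_of_real_mult:
  assumes "x \<ge> 0" "y \<ge> 0"
  shows "complex_of_real (x * y) powr s = complex_of_real x powr s * complex_of_real y powr s"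
  using assms by (simp add: powr_times_real)

lemma powr_dilation_identity:
  fixes a b :: nat and t :: real
  assumes "a > 0" "b > 0" "t \<ge> 0"
  shows "complex_of_real t powr s / of_nat b powr (2 * s)
       = complex_of_real (real a / real b * t) powr s / of_nat (a * b) powr s"
proof -
  have "complex_of_real (real a / real b * t) powr s * complex_of_real (real b) powr s
      = complex_of_real (real a / real b * t * real b) powr s"
    using assms by (intro powr_of_real_mult[symmetric]) auto
  also have "real a / real b * t * real b = real a * t" using assms by simp
  also have "complex_of_real (real a * t) powr s = complex_of_real (real a) powr s * complex_of_real t powr s"
    using assms by (intro powr_of_real_mult) auto
  finally have scaled: "complex_of_real (real a / real b * t) powr s * of_nat b powr s
      = of_nat a powr s * complex_of_real t powr s"
    by simp
  have "complex_of_real (real a * real b) powr s = complex_of_real (real a) powr s * complex_of_real (real b) powr s"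
    by (intro powr_of_real_mult) auto
  then have product: "(of_nat (a * b) :: complex) powr s = of_nat a powr s * of_nat b powr s"
    by simp
  have square: "(of_nat b :: complex) powr (2 * s) = of_nat b powr s * of_nat b powr s"
    by (simp only: mult_2 powr_add)
  show ?thesis
    unfolding product square using scaled assms by (simp add: field_simps)
qed

lemma infsum_lattice_term_induced:
  assumes "induced_char q1 chi1 q1s chi1s" "induced_char q2 chi2 q2s chi2s" "Im w > 0" "Re s > 1"
  shows "infsum (lattice_term k s chi1 chi2 w) (- {(0, 0)}) =
    (\<Sum>a | a dvd q1. \<Sum>b | b dvd q2.
       of_int (moebius_mu a) * chi1s (int a) * of_int (moebius_mu b) * chi2s (int b)
         / of_nat b powr (2 * s)
       * infsum (lattice_term k s chi1s chi2s (complex_of_real (real a / real b) * w)) (- {(0, 0)}))"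
proof -
  have "q1 > 0" "q2 > 0" "dirichlet_char q1s chi1s" "dirichlet_char q2s chi2s"
    using assms(1,2) by (auto simp: induced_char_def dirichlet_char_def)
  define m where "m a b = of_int (moebius_mu a) * chi1s (int a) * of_int (moebius_mu b) * chi2s (int b)
    / of_nat b powr (2 * s)" for a b :: nat
  define F where "F a b = lattice_term k s chi1s chi2s (complex_of_real (real a / real b) * w)" for a b
  define T where "T a b = (\<lambda>(c, d). if int a dvd c \<and> int b dvd d
      then m a b * F a b (c div int a, d div int b) else 0)" for a b
  have dilated: "(T a b has_sum m a b * infsum (F a b) (- {(0, 0)})) (- {(0, 0)})" if "a > 0" "b > 0" for a b
  proof -
    have "F a b summable_on - {(0, 0)}"
      unfolding F_def using that assms(3)
        dirichlet_char_norm_le_1[OF \<open>dirichlet_char q1s chi1s\<close>]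
        dirichlet_char_norm_le_1[OF \<open>dirichlet_char q2s chi2s\<close>]
      by (intro lattice_term_summable_on assms(4)) simp_all
    then have "((\<lambda>p. m a b * F a b p) has_sum m a b * infsum (F a b) (- {(0, 0)})) (- {(0, 0)})"
      by (intro has_sum_cmult_right has_sum_infsum)
    then show ?thesis unfolding T_def by (rule has_sum_dilated_lattice[OF that])
  qed
  have "((\<lambda>p. \<Sum>a | a dvd q1. \<Sum>b | b dvd q2. T a b p)
      has_sum (\<Sum>a | a dvd q1. \<Sum>b | b dvd q2. m a b * infsum (F a b) (- {(0, 0)}))) (- {(0, 0)})"
  proof (intro has_sum_sum)
    fix a b assume "a \<in> {a. a dvd q1}" "b \<in> {b. b dvd q2}"
    then show "(T a b has_sum m a b * infsum (F a b) (- {(0, 0)})) (- {(0, 0)})"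
      using \<open>q1 > 0\<close> \<open>q2 > 0\<close> by (intro dilated) (auto intro: dvd_pos_nat)
  qed (use \<open>q1 > 0\<close> \<open>q2 > 0\<close> in \<open>simp_all add: finite_divisors_nat\<close>)
  moreover have "lattice_term k s chi1 chi2 w = (\<lambda>p. \<Sum>a | a dvd q1. \<Sum>b | b dvd q2. T a b p)"
  proof
    fix p :: "int \<times> int"
    show "lattice_term k s chi1 chi2 w p = (\<Sum>a | a dvd q1. \<Sum>b | b dvd q2. T a b p)"
      by (cases p) (simp only: lattice_term_induced_expansion[OF assms(1,2)] T_def m_def F_def prod.case)
  qed
  ultimately show ?thesis unfolding m_def F_def by (simp only: infsumI)
qed

lemma eisenstein_lattice_sum_induced:
  assumes "induced_char q1 chi1 q1s chi1s" "induced_char q2 chi2 q2s chi2s" "Im w > 0" "Re s > 1"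
  shows "eisenstein_lattice_sum k s chi1 chi2 w =
    (\<Sum>a | a dvd q1. \<Sum>b | b dvd q2.
       of_int (moebius_mu a) * chi1s (int a) * of_int (moebius_mu b) * chi2s (int b) / of_nat (a * b) powr s
       * eisenstein_lattice_sum k s chi1s chi2s (complex_of_real (real a / real b) * w))"
  unfolding eisenstein_lattice_sum_def infsum_lattice_term_induced[OF assms] sum_distrib_left
proof (intro sum.cong refl)
  fix a b assume "a \<in> {a. a dvd q1}" "b \<in> {b. b dvd q2}"
  moreover have "q1 > 0" "q2 > 0" using assms(1,2) by (auto simp: induced_char_def dirichlet_char_def)
  ultimately have "a > 0" "b > 0" by (auto intro: dvd_pos_nat)
  then have dilation: "complex_of_real (Im w) powr s / of_nat b powr (2 * s)
      = complex_of_real (Im (complex_of_real (real a / real b) * w)) powr s / of_nat (a * b) powr s"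
    using powr_dilation_identity[of a b "Im w" s] assms(3) by simp
  have swap: "x * (m / y * i) = m * (x / y) * i" "m * (x / y) * i = m / y * (x * i)"
    for x m y i :: complex by simp_all
  show "complex_of_real (Im w) powr s * (of_int (moebius_mu a) * chi1s (int a) * of_int (moebius_mu b)
        * chi2s (int b) / of_nat b powr (2 * s) * infsum (lattice_term k s chi1s chi2s
          (complex_of_real (real a / real b) * w)) (- {(0, 0)}))
      = of_int (moebius_mu a) * chi1s (int a) * of_int (moebius_mu b) * chi2s (int b) / of_nat (a * b) powr s
        * (complex_of_real (Im (complex_of_real (real a / real b) * w)) powr s
          * infsum (lattice_term k s chi1s chi2s (complex_of_real (real a / real b) * w)) (- {(0, 0)}))"
    unfolding swap(1) dilation by (rule swap(2))
qed

theorem lemma5p1: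
  fixes k :: int and q1 q2 q1s q2s :: nat
    and chi1 chi2 chi1s chi2s :: "int \<Rightarrow> complex"
    and z s :: complex
  assumes "dirichlet_char q1 chi1" and "dirichlet_char q2 chi2"
    and "primitive_char q1s chi1s" and "primitive_char q2s chi2s"
    and "induced_char q1 chi1 q1s chi1s" and "induced_char q2 chi2 q2s chi2s"
    and "chi1 (-1) * chi2 (-1) = (-1) powi k"
    and "Im z > 0" and "Re s > 1"
  shows "eisenstein k q2 chi1 chi2 z s =
    dirichlet_L (\<lambda>n. chi1s n * chi2s n) (2 * s) / dirichlet_L (\<lambda>n. chi1 n * chi2 n) (2 * s)
    * (\<Sum>a | a dvd q1. \<Sum>b | b dvd q2.
        of_int (moebius_mu a) * chi1s (int a) * of_int (moebius_mu b) * chi2s (int b)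
          / (of_nat (a * b) powr s)
          * eisenstein k q2s chi1s chi2s
              (complex_of_real (real (a * q2) / real (b * q2s)) * z) s)"
proof -
  define Lc Ls where "Lc = dirichlet_L (\<lambda>n. chi1 n * chi2 n) (2 * s)"
    and "Ls = dirichlet_L (\<lambda>n. chi1s n * chi2s n) (2 * s)"
  define m where "m a b = of_int (moebius_mu a) * chi1s (int a) * of_int (moebius_mu b) * chi2s (int b)
    / of_nat (a * b) powr s" for a b :: nat
  have chi1s: "dirichlet_char q1s chi1s" and chi2s: "dirichlet_char q2s chi2s"
    using assms(5,6) by (auto simp: induced_char_def)
  then have "Ls \<noteq> 0" unfolding Ls_def using assms(9) by (rule dirichlet_L_char_product_nonzero)
  have "q1 > 0" "q2 > 0" using assms(1,2) by (auto simp: dirichlet_char_def)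
  then have "Im (of_nat q2 * z) > 0" using assms(8) by simp
  have primitive_terms: "eisenstein k q2s chi1s chi2s (complex_of_real (real (a * q2) / real (b * q2s)) * z) s
      = eisenstein_lattice_sum k s chi1s chi2s (complex_of_real (real a / real b) * (of_nat q2 * z)) / (2 * Ls)"
    if "a dvd q1" "b dvd q2" for a b
    using that \<open>q1 > 0\<close> \<open>q2 > 0\<close> unfolding Ls_def
    by (intro eisenstein_rescaled_eq_lattice_sum[OF chi1s chi2s assms(8,9)]) (auto intro: dvd_pos_nat)
  have "eisenstein k q2 chi1 chi2 z s = eisenstein_lattice_sum k s chi1 chi2 (of_nat q2 * z) / (2 * Lc)"
    unfolding Lc_def by (rule eisenstein_eq_lattice_sum[OF assms(1,2,8,9)])
  also have "\<dots> = (\<Sum>a | a dvd q1. \<Sum>b | b dvd q2.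
      m a b * eisenstein_lattice_sum k s chi1s chi2s (complex_of_real (real a / real b) * (of_nat q2 * z)))
      / (2 * Lc)"
    unfolding m_def by (subst eisenstein_lattice_sum_induced[OF assms(5,6) \<open>Im (of_nat q2 * z) > 0\<close> assms(9)]) simp
  also have "\<dots> = Ls / Lc * (\<Sum>a | a dvd q1. \<Sum>b | b dvd q2.
      m a b * (eisenstein_lattice_sum k s chi1s chi2s (complex_of_real (real a / real b) * (of_nat q2 * z)) / (2 * Ls)))"
    using \<open>Ls \<noteq> 0\<close> by (simp add: sum_distrib_left sum_divide_distrib mult.commute)
  also have "\<dots> = Ls / Lc * (\<Sum>a | a dvd q1. \<Sum>b | b dvd q2.
      m a b * eisenstein k q2s chi1s chi2s (complex_of_real (real (a * q2) / real (b * q2s)) * z) s)"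
    by (intro arg_cong[where f = "\<lambda>x. Ls / Lc * x"] sum.cong refl) (simp only: primitive_terms mem_Collect_eq)
  finally show ?thesis unfolding m_def Lc_def Ls_def .
qed

end
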